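(* For any family of policies $\Pi$, $\mathrm{CH}(\Pi)\subseteq\mathrm{CDUS}(\Pi)$.
   Context: $\Pi=\{\pi_1,\pi_2,\dots\}$ is a family of policies of a multi-objective sequential decision problem with $d$ objectives; each $\pi\in\Pi$ has a random return vector $\mathbf{Z}^\pi\in\mathbb{R}^d$ with finite expectation $\mathbf{V}^\pi=\mathbb{E}[\mathbf{Z}^\pi]$. $\Delta^{|\Pi|}$ denotes probability weight vectors $\lambda$ over $\Pi$, and $\sum_i\lambda_i\mathbf{Z}^{\pi_i}$ denotes the mixture distribution (CDF $\sum_i\lambda_iF_{\mathbf{Z}^{\pi_i}}$). For $\mathbf{x},\mathbf{y}\in\mathbb{R}^d$: $\mathbf{y}\preceq_p\mathbf{x}$ iff $y_i\le x_i$ for all $i$; $\mathbf{x}\succ_p\mathbf{y}$ iff $x_i\ge y_i$ for all $i$ and $x_i>y_i$ for some $i$. CDF: $F_{\mathbf{X}}(\mathbf{x})=P(\mathbf{X}\preceq_p\mathbf{x})$. $\mathbf{X}\succeq_{\mathrm{FSD}}\mathbf{Y}$ iff $F_{\mathbf{X}}\le F_{\mathbf{Y}}$ pointwise; $\succ_{\mathrm{FSD}}$ additionally requires strict inequality at some point. $\mathbf{X}\succ_d\mathbf{Y}$ iff $\mathbf{X}\succeq_{\mathrm{FSD}}\mathbf{Y}$ and $X_j\succ_{\mathrm{FSD}}Y_j$ for some marginal $j$. Convex hull: $\mathrm{CH}(\Pi)=\{\pi\in\Pi:\nexists\lambda\in\Delta^{|\Pi|},\ \sum_i\lambda_i\mathbf{V}^{\pi_i}\succ_p\mathbf{V}^\pi\}$.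 Convex distributional undominated set: $\mathrm{CDUS}(\Pi)=\{\pi\in\Pi:\nexists\lambda\in\Delta^{|\Pi|},\ \sum_i\lambda_i\mathbf{Z}^{\pi_i}\succ_d\mathbf{Z}^\pi\}$. *)

theory Defs
  imports "HOL-Probability.Probability"
begin

text \<open>Return vectors live in real^'d (d = CARD('d) objectives). The return
distribution of a policy is a probability measure on the Borel sets of real^'d.\<close>

definition pareto_le :: "real^'d \<Rightarrow> real^'d \<Rightarrow> bool" where
  "pareto_le y x \<longleftrightarrow> (\<forall>i. y$i \<le> x$i)"

definition pareto_dom :: "real^'d \<Rightarrow> real^'d \<Rightarrow> bool" where
  "pareto_dom x y \<longleftrightarrow> (\<forall>i. x$i \<ge> y$i) \<and> (\<exists>i. x$i > y$i)"

definition cdf_vec :: "(real^'d) measure \<Rightarrow> real^'d \<Rightarrow> real" where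
  "cdf_vec M x = measure M {y. pareto_le y x}"

definition marg_cdf :: "(real^'d) measure \<Rightarrow> 'd \<Rightarrow> real \<Rightarrow> real" where
  "marg_cdf M j t = measure M {y. y$j \<le> t}"

definition fsd_ge :: "(real^'d) measure \<Rightarrow> (real^'d) measure \<Rightarrow> bool" where
  "fsd_ge X Y \<longleftrightarrow> (\<forall>x. cdf_vec X x \<le> cdf_vec Y x)"

definition marg_fsd_gt :: "(real^'d) measure \<Rightarrow> (real^'d) measure \<Rightarrow> 'd \<Rightarrow> bool" where
  "marg_fsd_gt X Y j \<longleftrightarrow> (\<forall>t. marg_cdf X j t \<le> marg_cdf Y j t) \<and> (\<exists>t. marg_cdf X j t < marg_cdf Y j t)"

definition dist_dom :: "(real^'d) measure \<Rightarrow> (real^'d) measure \<Rightarrow> bool" where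
  "dist_dom X Y \<longleftrightarrow> fsd_ge X Y \<and> (\<exists>j. marg_fsd_gt X Y j)"

definition expval :: "(real^'d) measure \<Rightarrow> real^'d" where
  "expval M = integral\<^sup>L M (\<lambda>x. x)"

definition weight_simplex :: "'p set \<Rightarrow> ('p \<Rightarrow> real) set" where
  "weight_simplex P = {l. (\<forall>p\<in>P. l p \<ge> 0) \<and> (\<Sum>p\<in>P. l p) = 1}"

text \<open>Mixture distribution \<Sum> l_i Z^{pi_i} (its CDF is \<Sum> l_i F_i).\<close>
definition mixture :: "'p set \<Rightarrow> ('p \<Rightarrow> real) \<Rightarrow> ('p \<Rightarrow> (real^'d) measure) \<Rightarrow> (real^'d) measure" where
  "mixture P l Z = measure_of UNIV (sets borel)
     (\<lambda>A. \<Sum>p\<in>P. ennreal (l p) * emeasure (Z p) A)"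

definition CH :: "'p set \<Rightarrow> ('p \<Rightarrow> (real^'d) measure) \<Rightarrow> 'p set" where
  "CH P Z = {p\<in>P. \<not> (\<exists>l\<in>weight_simplex P.
       pareto_dom (\<Sum>q\<in>P. l q *\<^sub>R expval (Z q)) (expval (Z p)))}"

definition CDUS :: "'p set \<Rightarrow> ('p \<Rightarrow> (real^'d) measure) \<Rightarrow> 'p set" where
  "CDUS P Z = {p\<in>P. \<not> (\<exists>l\<in>weight_simplex P. dist_dom (mixture P l Z) (Z p))}"

end

theory Submission
  imports Defs
begin

text \<open>If a mixture of the policies' return distributions dominates \<open>Z p\<close>, then passing to
the limit in the joint CDF shows that every marginal CDF of the mixture lies below the
corresponding marginal CDF of \<open>Z p\<close>, strictly for some coordinate. Coupling two real
distributions through their quantile functions on \<open>(0, 1)\<close> turns this CDF order into an order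
of means, so the mean of the mixture Pareto-dominates the mean of \<open>Z p\<close>. Since the mean of a
mixture is the convex combination of the means, \<open>p\<close> cannot lie in the convex hull set.\<close>

lemma expval_nth:
  fixes M :: "(real^'d) measure"
  assumes "integrable M (\<lambda>x. x)"
  shows "expval M $ i = (\<integral>x. x $ i \<partial>M)"
  unfolding expval_def by (rule integral_bounded_linear[OF bounded_linear_vec_nth assms, symmetric])

context
  fixes P :: "'p set" and l :: "'p \<Rightarrow> real" and Z :: "'p \<Rightarrow> (real^'d) measure"
  assumes finite_P: "finite P" and weights: "l \<in> weight_simplex P"
    and prob_Z: "\<And>p. p \<in> P \<Longrightarrow> prob_space (Z p)"
    and sets_Z: "\<And>p. p \<in> P \<Longrightarrow> sets (Z p) = sets borel"
begin

private abbreviation "W \<equiv> density (count_space P) (\<lambda>q. ennreal (l q))"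

private lemma P_nonempty: "P \<noteq> {}"
  using weights by (auto simp: weight_simplex_def)

private lemma prob_space_W: "prob_space W"
proof (rule prob_spaceI)
  have "emeasure W P = (\<Sum>q\<in>P. ennreal (l q))"
    using finite_P by (simp add: emeasure_density nn_integral_count_space_finite)
  also have "\<dots> = 1"
    using weights by (simp add: weight_simplex_def sum_ennreal[symmetric])
  finally show "emeasure W (space W) = 1" by simp
qed

private lemma Z_measurable: "Z \<in> measurable W (subprob_algebra borel)"
  unfolding measurable_cong_sets[OF sets_density refl]
  by (auto simp: space_subprob_algebra sets_Z prob_space_imp_subprob_space prob_Z)

lemma mixture_eq_bind: "mixture P l Z = W \<bind> Z"
proof -
  have sets_bind: "sets (W \<bind> Z) = sets borel"
    by (rule sets_bind) (auto simp: sets_Z P_nonempty)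
  have "emeasure (W \<bind> Z) A = (\<Sum>q\<in>P. ennreal (l q) * emeasure (Z q) A)"
    if "A \<in> sets borel" for A
  proof -
    have "emeasure (W \<bind> Z) A = (\<integral>\<^sup>+q. emeasure (Z q) A \<partial>W)"
      by (rule emeasure_bind[OF _ Z_measurable that]) (simp add: P_nonempty)
    also have "\<dots> = (\<Sum>q\<in>P. ennreal (l q) * emeasure (Z q) A)"
      using finite_P by (simp add: nn_integral_density nn_integral_count_space_finite)
    finally show ?thesis .
  qed
  then have "measure_of UNIV (sets borel) (emeasure (W \<bind> Z)) = mixture P l Z"
    unfolding mixture_def
    by (intro measure_of_eq) (auto simp: sets.sigma_sets_eq[of borel, simplified])
  moreover have "measure_of UNIV (sets borel) (emeasure (W \<bind> Z)) = W \<bind> Z"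
    using measure_of_of_measure[of "W \<bind> Z"] sets_eq_imp_space_eq[OF sets_bind]
    by (simp add: sets_bind)
  ultimately show ?thesis by simp
qed

lemma sets_mixture: "sets (mixture P l Z) = sets borel"
  unfolding mixture_eq_bind by (rule sets_bind) (auto simp: sets_Z P_nonempty)

lemma prob_space_mixture: "prob_space (mixture P l Z)"
  unfolding mixture_eq_bind
  by (rule prob_space.prob_space_bind[OF prob_space_W _ Z_measurable]) (auto simp: prob_Z)

lemma nn_integral_mixture:
  assumes "g \<in> borel_measurable borel"
  shows "(\<integral>\<^sup>+x. g x \<partial>mixture P l Z) = (\<Sum>q\<in>P. ennreal (l q) * (\<integral>\<^sup>+x. g x \<partial>Z q))"
  unfolding mixture_eq_bind nn_integral_bind[OF assms Z_measurable]
  using finite_P by (simp add: nn_integral_density nn_integral_count_space_finite)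

private lemma borel_measurable_of_integrable:
  assumes "\<And>q. q \<in> P \<Longrightarrow> integrable (Z q) f"
  shows "f \<in> borel_measurable borel"
proof -
  obtain p where p: "p \<in> P" using P_nonempty by blast
  have "f \<in> borel_measurable (Z p)"
    using assms[OF p] by (rule borel_measurable_integrable)
  then show ?thesis
    by (subst (asm) measurable_cong_sets[OF sets_Z[OF p] refl])
qed

lemma integrable_mixture:
  fixes f :: "real^'d \<Rightarrow> 'b::{banach, second_countable_topology}"
  assumes f: "\<And>q. q \<in> P \<Longrightarrow> integrable (Z q) f"
  shows "integrable (mixture P l Z) f"
proof -
  have f_borel: "f \<in> borel_measurable borel"
    using borel_measurable_of_integrable f by blast
  have "(\<integral>\<^sup>+x. norm (f x) \<partial>mixture P l Z) = (\<Sum>q\<in>P. ennreal (l q) * (\<integral>\<^sup>+x. norm (f x) \<partial>Z q))"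
    using f_borel by (intro nn_integral_mixture) measurable
  also have "\<dots> < \<infinity>"
    using f finite_P by (auto simp: integrable_iff_bounded ennreal_mult_less_top)
  finally show ?thesis
    using f_borel by (simp add: integrable_iff_bounded measurable_cong_sets[OF sets_mixture refl])
qed

private lemma enn2real_nn_integral_mixture:
  assumes "g \<in> borel_measurable borel" "\<And>q. q \<in> P \<Longrightarrow> (\<integral>\<^sup>+x. ennreal (g x) \<partial>Z q) \<noteq> \<infinity>"
  shows "enn2real (\<integral>\<^sup>+x. ennreal (g x) \<partial>mixture P l Z)
    = (\<Sum>q\<in>P. l q * enn2real (\<integral>\<^sup>+x. ennreal (g x) \<partial>Z q))"
proof -
  have "enn2real (\<integral>\<^sup>+x. ennreal (g x) \<partial>mixture P l Z)
      = (\<Sum>q\<in>P. enn2real (ennreal (l q) * (\<integral>\<^sup>+x. ennreal (g x) \<partial>Z q)))"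
    unfolding nn_integral_mixture[OF measurable_compose[OF assms(1) measurable_ennreal]]
    using assms(2) by (subst enn2real_sum) (auto simp: ennreal_mult_less_top top.not_eq_extremum)
  also have "\<dots> = (\<Sum>q\<in>P. l q * enn2real (\<integral>\<^sup>+x. ennreal (g x) \<partial>Z q))"
    using weights by (intro sum.cong refl) (simp add: enn2real_mult weight_simplex_def)
  finally show ?thesis .
qed

lemma integral_mixture:
  fixes f :: "real^'d \<Rightarrow> real"
  assumes f: "\<And>q. q \<in> P \<Longrightarrow> integrable (Z q) f"
  shows "integral\<^sup>L (mixture P l Z) f = (\<Sum>q\<in>P. l q * integral\<^sup>L (Z q) f)"
proof -
  have f_borel: "f \<in> borel_measurable borel"
    using borel_measurable_of_integrable f by blast
  have pos: "enn2real (\<integral>\<^sup>+x. ennreal (f x) \<partial>mixture P l Z)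
      = (\<Sum>q\<in>P. l q * enn2real (\<integral>\<^sup>+x. ennreal (f x) \<partial>Z q))"
    using f_borel integrableD(2)[OF f] by (rule enn2real_nn_integral_mixture)
  have neg: "enn2real (\<integral>\<^sup>+x. ennreal (- f x) \<partial>mixture P l Z)
      = (\<Sum>q\<in>P. l q * enn2real (\<integral>\<^sup>+x. ennreal (- f x) \<partial>Z q))"
    using borel_measurable_uminus[OF f_borel] integrableD(3)[OF f]
    by (rule enn2real_nn_integral_mixture)
  have "integral\<^sup>L (mixture P l Z) f
      = enn2real (\<integral>\<^sup>+x. ennreal (f x) \<partial>mixture P l Z)
        - enn2real (\<integral>\<^sup>+x. ennreal (- f x) \<partial>mixture P l Z)"
    by (rule real_lebesgue_integral_def[OF integrable_mixture[OF f]])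
  also have "\<dots> = (\<Sum>q\<in>P. l q *
      (enn2real (\<integral>\<^sup>+x. ennreal (f x) \<partial>Z q) - enn2real (\<integral>\<^sup>+x. ennreal (- f x) \<partial>Z q)))"
    unfolding pos neg by (simp add: right_diff_distrib sum_subtractf)
  also have "\<dots> = (\<Sum>q\<in>P. l q * integral\<^sup>L (Z q) f)"
    by (intro sum.cong refl) (simp add: real_lebesgue_integral_def[OF f])
  finally show ?thesis .
qed

lemma expval_mixture:
  assumes Z_integrable: "\<And>q. q \<in> P \<Longrightarrow> integrable (Z q) (\<lambda>x. x)"
  shows "expval (mixture P l Z) = (\<Sum>q\<in>P. l q *\<^sub>R expval (Z q))"
proof -
  have "expval (mixture P l Z) $ i = (\<Sum>q\<in>P. l q *\<^sub>R expval (Z q)) $ i" for i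
  proof -
    have nth_integrable: "integrable (Z q) (\<lambda>x. x $ i)" if "q \<in> P" for q
      by (rule integrable_bounded_linear[OF bounded_linear_vec_nth Z_integrable[OF that]])
    have "expval (mixture P l Z) $ i = integral\<^sup>L (mixture P l Z) (\<lambda>x. x $ i)"
      by (rule expval_nth[OF integrable_mixture[OF Z_integrable]])
    also have "\<dots> = (\<Sum>q\<in>P. l q * integral\<^sup>L (Z q) (\<lambda>x. x $ i))"
      by (rule integral_mixture[OF nth_integrable])
    also have "\<dots> = (\<Sum>q\<in>P. l q * expval (Z q) $ i)"
      by (intro sum.cong refl) (simp add: expval_nth Z_integrable)
    finally show ?thesis by simp
  qed
  then show ?thesis by (simp add: vec_eq_iff)
qed

end

lemma (in cdf_distribution) integral_eq_quantile_integral: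
  assumes "integrable M (\<lambda>x. x)"
  shows "integrable (restrict_space lborel {0<..<1}) I"
    and "(\<integral>x. x \<partial>M) = (\<integral>\<omega>. I \<omega> \<partial>restrict_space lborel {0<..<1})"
proof -
  have "sets (restrict_space lborel {0<..<1::real}) = sets (restrict_space borel {0<..<1})"
    by (rule sets_restrict_space_cong) simp
  then have I_borel: "I \<in> borel_measurable (restrict_space lborel {0<..<1})"
    using measurable_CI measurable_cong_sets[OF _ refl] by blast
  show "integrable (restrict_space lborel {0<..<1}) I"
    using assms integrable_distr_eq[OF I_borel measurable_ident_sets[OF refl]]
    by (simp add: distr_I_eq_M)
  show "(\<integral>x. x \<partial>M) = (\<integral>\<omega>. I \<omega> \<partial>restrict_space lborel {0<..<1})"
    using integral_distr[OF I_borel, of "\<lambda>x. x"] by (simp add: distr_I_eq_M)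
qed

lemma quantile_le_of_cdf_le:
  assumes "real_distribution M" "real_distribution N" "\<And>t. cdf M t \<le> cdf N t"
    and "0 < \<omega>" "\<omega> < 1"
  shows "Inf {x. \<omega> \<le> cdf N x} \<le> Inf {x. \<omega> \<le> cdf M x}"
proof -
  interpret M: cdf_distribution M by (rule cdf_distribution.intro) fact
  interpret N: cdf_distribution N by (rule cdf_distribution.intro) fact
  have "\<omega> \<le> cdf M (M.I \<omega>)"
    using M.pseudoinverse[OF assms(4,5), of "M.I \<omega>"] by (rule iffD2) (rule order_refl)
  also have "\<dots> \<le> cdf N (M.I \<omega>)"
    by fact
  finally show ?thesis
    by (rule N.pseudoinverse[OF assms(4,5), THEN iffD1])
qed

lemma quantile_less_of_cdf_less:
  assumes "real_distribution M" "real_distribution N" "cdf M t < \<omega>" "\<omega> < cdf N t"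
  shows "Inf {x. \<omega> \<le> cdf N x} < Inf {x. \<omega> \<le> cdf M x}"
proof -
  interpret M: cdf_distribution M by (rule cdf_distribution.intro) fact
  interpret N: cdf_distribution N by (rule cdf_distribution.intro) fact
  have \<omega>: "0 < \<omega>" "\<omega> < 1"
    using assms(3,4) M.cdf_nonneg[of t] N.cdf_bounded_prob[of t] by linarith+
  have "N.I \<omega> \<le> t"
    using assms(4) by (intro N.pseudoinverse[OF \<omega>, THEN iffD1]) simp
  moreover have "\<not> M.I \<omega> \<le> t"
    using assms(3) M.pseudoinverse[OF \<omega>, of t] by linarith
  ultimately show ?thesis by simp
qed

lemma expectation_le_of_cdf_le:
  assumes "real_distribution M" "real_distribution N"
    and "integrable M (\<lambda>x. x)" "integrable N (\<lambda>x. x)"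
    and "\<And>t. cdf M t \<le> cdf N t"
  shows "(\<integral>x. x \<partial>N) \<le> (\<integral>x. x \<partial>M)"
proof -
  interpret M: cdf_distribution M by (rule cdf_distribution.intro) fact
  interpret N: cdf_distribution N by (rule cdf_distribution.intro) fact
  show ?thesis
    unfolding M.integral_eq_quantile_integral[OF assms(3)] N.integral_eq_quantile_integral[OF assms(4)]
    using M.integral_eq_quantile_integral(1)[OF assms(3)] N.integral_eq_quantile_integral(1)[OF assms(4)]
      quantile_le_of_cdf_le[OF assms(1,2,5)]
    by (intro integral_mono) (auto simp: space_restrict_space)
qed

lemma expectation_less_of_cdf_less:
  assumes "real_distribution M" "real_distribution N"
    and "integrable M (\<lambda>x. x)" "integrable N (\<lambda>x. x)"
    and "\<And>t. cdf M t \<le> cdf N t" "cdf M t < cdf N t"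
  shows "(\<integral>x. x \<partial>N) < (\<integral>x. x \<partial>M)"
proof -
  interpret M: cdf_distribution M by (rule cdf_distribution.intro) fact
  interpret N: cdf_distribution N by (rule cdf_distribution.intro) fact
  let ?\<Omega> = "restrict_space lborel {0<..<1::real}"
  interpret \<Omega>: prob_space ?\<Omega>
    by (auto simp: emeasure_restrict_space space_restrict_space intro!: prob_spaceI)
  let ?S = "{cdf M t <..< cdf N t}"
  have S_sub: "?S \<subseteq> {0<..<1}"
    using M.cdf_nonneg[of t] N.cdf_bounded_prob[of t] by auto
  have "emeasure ?\<Omega> ?S = ennreal (cdf N t - cdf M t)"
    using S_sub assms(6) by (simp add: emeasure_restrict_space Int_absorb2)
  then have S_pos: "emeasure ?\<Omega> ?S \<noteq> 0"
    using assms(6) by simp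
  have S_sets: "?S \<in> sets ?\<Omega>"
    using S_sub by (auto simp: sets_restrict_space_iff)
  \<comment> \<open>the two quantile functions differ on the interval \<open>?S\<close> of positive length\<close>
  show ?thesis
    unfolding M.integral_eq_quantile_integral[OF assms(3)] N.integral_eq_quantile_integral[OF assms(4)]
  proof (rule \<Omega>.integral_less_AE[OF _ _ S_pos S_sets])
    show "integrable ?\<Omega> N.I" "integrable ?\<Omega> M.I"
      using M.integral_eq_quantile_integral(1)[OF assms(3)]
        N.integral_eq_quantile_integral(1)[OF assms(4)] by auto
    show "AE \<omega> in ?\<Omega>. N.I \<omega> \<le> M.I \<omega>"
      using quantile_le_of_cdf_le[OF assms(1,2,5)] by (intro AE_I2) (auto simp: space_restrict_space)
    show "AE \<omega> in ?\<Omega>. \<omega> \<in> ?S \<longrightarrow> N.I \<omega> \<noteq> M.I \<omega>"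
      using quantile_less_of_cdf_less[OF assms(1,2)] by (intro AE_I2) force
  qed
qed

definition marginal :: "(real^'d) measure \<Rightarrow> 'd \<Rightarrow> real measure" where
  "marginal X j = distr X borel (\<lambda>x. x $ j)"

lemma pareto_le_lower_set_borel:
  fixes x :: "real^'d"
  shows "{y. pareto_le y x} \<in> sets borel"
proof -
  have "{y. pareto_le y x} = (\<Inter>i. {y. y $ i \<le> x $ i})"
    by (auto simp: pareto_le_def)
  moreover have "closed {y::real^'d. y $ i \<le> x $ i}" for i
    by (intro closed_Collect_le continuous_intros)
  ultimately show ?thesis by auto
qed

context
  fixes X :: "(real^'d) measure"
  assumes prob_X: "prob_space X" and sets_X: "sets X = sets borel"
begin

private lemma nth_measurable: "(\<lambda>x. x $ j) \<in> borel_measurable X"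
  by (subst measurable_cong_sets[OF sets_X refl]) (intro borel_measurable_continuous_onI continuous_intros)

lemma real_distribution_marginal: "real_distribution (marginal X j)"
  unfolding marginal_def using prob_X nth_measurable by (rule prob_space.real_distribution_distr)

lemma cdf_marginal: "cdf (marginal X j) t = marg_cdf X j t"
proof -
  have "(\<lambda>x. x $ j) -` {..t} \<inter> space X = {y. y $ j \<le> t}"
    using sets_eq_imp_space_eq[OF sets_X] by auto
  then show ?thesis
    unfolding cdf_def marg_cdf_def marginal_def by (simp add: measure_distr[OF nth_measurable])
qed

lemma integrable_marginal:
  assumes "integrable X (\<lambda>x. x)"
  shows "integrable (marginal X j) (\<lambda>x. x)"
  unfolding marginal_def
  using integrable_distr_eq[OF nth_measurable measurable_ident_sets[OF refl]]
    integrable_bounded_linear[OF bounded_linear_vec_nth assms] by simp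

lemma integral_marginal:
  assumes "integrable X (\<lambda>x. x)"
  shows "(\<integral>x. x \<partial>marginal X j) = expval X $ j"
  unfolding marginal_def expval_nth[OF assms]
  using integral_distr[OF nth_measurable measurable_ident_sets[OF refl]] by simp

lemma cdf_vec_tendsto_marg_cdf:
  "(\<lambda>n. cdf_vec X (\<chi> i. if i = j then t else real n)) \<longlonglongrightarrow> marg_cdf X j t"
proof -
  interpret prob_space X by (rule prob_X)
  define A where "A n = {y. pareto_le y (\<chi> i. if i = j then t else real n)}" for n
  have "range A \<subseteq> sets X"
    unfolding A_def sets_X using pareto_le_lower_set_borel by auto
  moreover have "incseq A"
    unfolding incseq_def A_def pareto_le_def by (auto intro: order_trans)
  moreover have "(\<Union>n. A n) = {y. y $ j \<le> t}"
  proof (intro equalityI subsetI)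
    fix y assume "y \<in> (\<Union>n. A n)"
    then show "y \<in> {y. y $ j \<le> t}"
      by (auto simp: A_def pareto_le_def dest: spec[of _ j])
  next
    fix y assume y: "y \<in> {y. y $ j \<le> t}"
    obtain n where n: "norm y \<le> real n"
      using real_arch_simple by blast
    have "y $ i \<le> real n" for i
      using component_le_norm_cart[of y i] abs_ge_self[of "y $ i"] n by linarith
    then have "y \<in> A n"
      using y by (auto simp: A_def pareto_le_def)
    then show "y \<in> (\<Union>n. A n)" by blast
  qed
  ultimately show ?thesis
    using finite_Lim_measure_incseq[of A] by (simp add: cdf_vec_def marg_cdf_def A_def)
qed

end

lemma fsd_ge_imp_marg_cdf_le:
  assumes "prob_space X" "sets X = sets borel" "prob_space Y" "sets Y = sets borel"
    and "fsd_ge X Y"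
  shows "marg_cdf X j t \<le> marg_cdf Y j t"
  using assms(5)
  by (intro LIMSEQ_le[OF cdf_vec_tendsto_marg_cdf[OF assms(1,2)] cdf_vec_tendsto_marg_cdf[OF assms(3,4)]])
    (auto simp: fsd_ge_def)

lemma dist_dom_imp_pareto_dom_expval:
  assumes X: "prob_space X" "sets X = sets borel" "integrable X (\<lambda>x. x)"
    and Y: "prob_space Y" "sets Y = sets borel" "integrable Y (\<lambda>x. x)"
    and "dist_dom X Y"
  shows "pareto_dom (expval X) (expval Y)"
proof -
  note distributions = real_distribution_marginal[OF X(1,2)] real_distribution_marginal[OF Y(1,2)]
    integrable_marginal[OF X] integrable_marginal[OF Y]
  have marginals_le: "cdf (marginal X i) t \<le> cdf (marginal Y i) t" for i t
    unfolding cdf_marginal[OF X(1,2)] cdf_marginal[OF Y(1,2)]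
    using \<open>dist_dom X Y\<close> by (intro fsd_ge_imp_marg_cdf_le[OF X(1,2) Y(1,2)]) (simp add: dist_dom_def)
  have "expval Y $ i \<le> expval X $ i" for i
    using expectation_le_of_cdf_le[OF distributions marginals_le]
    by (simp add: integral_marginal X Y)
  moreover obtain j t where "marg_cdf X j t < marg_cdf Y j t"
    using \<open>dist_dom X Y\<close> by (auto simp: dist_dom_def marg_fsd_gt_def)
  then have "expval Y $ j < expval X $ j"
    using expectation_less_of_cdf_less[OF distributions marginals_le]
    by (simp add: integral_marginal X Y cdf_marginal)
  ultimately show ?thesis
    unfolding pareto_dom_def by blast
qed

theorem corollary5p1p1:
  fixes P :: "'p set" and Z :: "'p \<Rightarrow> (real^'d) measure"
  assumes "finite P"
    and "\<And>p. p \<in> P \<Longrightarrow> prob_space (Z p)"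
    and "\<And>p. p \<in> P \<Longrightarrow> sets (Z p) = sets borel"
    and "\<And>p. p \<in> P \<Longrightarrow> integrable (Z p) (\<lambda>x. x)"
  shows "CH P Z \<subseteq> CDUS P Z"
proof
  fix p assume p_CH: "p \<in> CH P Z"
  then have p: "p \<in> P" by (simp add: CH_def)
  show "p \<in> CDUS P Z"
  proof (unfold CDUS_def, intro CollectI conjI p notI)
    assume "\<exists>l\<in>weight_simplex P. dist_dom (mixture P l Z) (Z p)"
    then obtain l where l: "l \<in> weight_simplex P" and dominated: "dist_dom (mixture P l Z) (Z p)"
      by blast
    note mixture = prob_space_mixture[OF assms(1) l assms(2,3)] sets_mixture[OF assms(1) l assms(2,3)]
      integrable_mixture[OF assms(1) l assms(2,3,4)]
    have "pareto_dom (expval (mixture P l Z)) (expval (Z p))"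
      using dominated by (intro dist_dom_imp_pareto_dom_expval[OF mixture assms(2-4)[OF p]])
    then show False
      using p_CH l by (auto simp: CH_def expval_mixture[OF assms(1) l assms(2-4)])
  qed
qed

end
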